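(* Let $u_{t-1}\in\mathbb{R}^m$ be fixed (measurable with respect to $\mathcal{F}_{t-1}$), let $w_t\in[-1,1]$ with $\mathrm{dist}(w_t,\{-1,0,1\})\ge\varepsilon$, and let $X_t\sim\mathcal{N}(0,\sigma^2I_m)$ be independent of $\mathcal{F}_{t-1}$. Define $U:=\{\|X_t\|_2\le C_{\sup}\sigma\sqrt{m\log N_0}\}$ and $\lambda:=\frac{C_\lambda}{C_{\sup}^2\sigma^2m\log N_0}$, where $C_{\sup}>0$ and $C_\lambda\in(0,c_{norm}/12)$. Let $\rho\in(0,1)$. Then there is a universal constant $C>0$ such that with $\beta:=\frac{Ce^{C_\lambda}\sigma m\log(N_0)}{\rho\varepsilon}$, $$\mathbb{E}\left[e^{\lambda\Delta\|u_t\|_2^2}\mathbb{1}_{q_t=0}\mathbb{1}_U\mathbb{1}_{\|u_{t-1}\|_2\ge\beta}\,\middle|\,\mathcal{F}_{t-1}\right]\le\rho.$$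
   Context: $q_t=\mathcal{Q}(w_t+X_t^Tu_{t-1}/\|X_t\|_2^2)$ with $\mathcal{Q}(z)=\arg\min_{p\in\{-1,0,1\}}|z-p|$, $u_t=u_{t-1}+(w_t-q_t)X_t$, and $\Delta\|u_t\|_2^2:=\|u_t\|_2^2-\|u_{t-1}\|_2^2=(w_t-q_t)^2\|X_t\|_2^2+2(w_t-q_t)\langle X_t,u_{t-1}\rangle$. $\mathcal{F}_{t-1}$ is the sigma-algebra generated by the first $t-1$ steps of this quantization iteration (started at $u_0=0$). $c_{norm}$ is the absolute constant in the Gaussian norm concentration inequality $\mathbb{P}(|\|g\|_2-\sqrt m|\ge a)\le 2e^{-c_{norm}a^2}$ for $g\sim\mathcal{N}(0,I_m)$, $a>0$. *)

theory Defs
  imports "HOL-Analysis.Analysis" "HOL-Probability.Probability"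
begin

text \<open>Vectors of \<open>\<real>^m\<close> are represented as functions \<open>nat \<Rightarrow> real\<close>; only the
  coordinates \<open>i < m\<close> matter.\<close>

definition vnorm :: "nat \<Rightarrow> (nat \<Rightarrow> real) \<Rightarrow> real" where
  "vnorm m x = sqrt (\<Sum>i<m. (x i)\<^sup>2)"

definition vinner :: "nat \<Rightarrow> (nat \<Rightarrow> real) \<Rightarrow> (nat \<Rightarrow> real) \<Rightarrow> real" where
  "vinner m x y = (\<Sum>i<m. x i * y i)"

definition gauss_vec :: "nat \<Rightarrow> real \<Rightarrow> (nat \<Rightarrow> real) measure" where
  "gauss_vec m \<sigma> = PiM {..<m} (\<lambda>_. density lborel (normal_density 0 \<sigma>))"

text \<open>Quantizer \<open>Q(z) = argmin_{p \<in> {-1,0,1}} |z - p|\<close> (ties broken towards 0).\<close>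
definition Q :: "real \<Rightarrow> real" where
  "Q z = (if z < -1/2 then -1 else if z \<le> 1/2 then 0 else 1)"

definition q_step :: "nat \<Rightarrow> real \<Rightarrow> (nat \<Rightarrow> real) \<Rightarrow> (nat \<Rightarrow> real) \<Rightarrow> real" where
  "q_step m w u X = Q (w + vinner m X u / (vnorm m X)\<^sup>2)"

text \<open>\<open>\<Delta>\<parallel>u_t\<parallel>\<^sup>2 = (w-q)\<^sup>2 \<parallel>X\<parallel>\<^sup>2 + 2 (w-q) \<langle>X,u\<rangle>\<close>.\<close>
definition delta_sq :: "nat \<Rightarrow> real \<Rightarrow> (nat \<Rightarrow> real) \<Rightarrow> (nat \<Rightarrow> real) \<Rightarrow> real" where
  "delta_sq m w u X =
     (w - q_step m w u X)\<^sup>2 * (vnorm m X)\<^sup>2 + 2 * (w - q_step m w u X) * vinner m X u"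

definition gauss_norm_conc :: "real \<Rightarrow> bool" where
  "gauss_norm_conc c \<longleftrightarrow> c > 0 \<and>
     (\<forall>m a. a > 0 \<longrightarrow>
        measure (gauss_vec m 1) {g \<in> space (gauss_vec m 1). \<bar>vnorm m g - sqrt (real m)\<bar> \<ge> a}
          \<le> 2 * exp (- c * a\<^sup>2))"

end

theory Submission
  imports Defs
begin

(* On the event q_t = 0 inside U, the increment obeys lam * Delta <= lam |X|^2 <= C_lam and
   |<X, u>| <= 3/2 |X|^2, so the expectation is at most exp C_lam times the probability of the
   latter event. By rotation invariance of the Gaussian law, (<X, u>, |X|^2) is distributed like
   (|u| t, t^2 + R) with t ~ N(0, sigma^2) independent of R = |X'|^2, X' ~ N(0, sigma^2 I_(m-1)).
   The event then forces |t| <= 3 R / |u| or t^2 >= |u|^2 / 9, which has probability at most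
   3 (m - 1) sigma / |u| + 9 sigma^2 / |u|^2; this is below rho exp (- C_lam) as soon as
   |u| >= beta with C = 40. *)

lemma borel_measurable_compose_binary:
  assumes "case_prod f \<in> borel_measurable (borel \<Otimes>\<^sub>M borel)"
    and "g \<in> borel_measurable M" and "h \<in> borel_measurable M"
  shows "(\<lambda>x. f (g x) (h x) :: ennreal) \<in> borel_measurable M"
  using measurable_compose[OF measurable_Pair[OF assms(2,3)] assms(1)] by simp

lemma borel_measurable_case_prod_compose_binary:
  assumes "case_prod f \<in> borel_measurable (borel \<Otimes>\<^sub>M borel)"
    and "case_prod g \<in> (borel \<Otimes>\<^sub>M borel) \<rightarrow>\<^sub>M (borel :: real measure)"
    and "case_prod h \<in> (borel \<Otimes>\<^sub>M borel) \<rightarrow>\<^sub>M (borel :: real measure)"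
  shows "case_prod (\<lambda>x y. f (g x y) (h x y) :: ennreal) \<in> borel_measurable (borel \<Otimes>\<^sub>M borel)"
  using borel_measurable_compose_binary[OF assms(1), of "case_prod g" _ "case_prod h"] assms(2,3)
  by (simp add: split_beta')

definition plane_nn_integral :: "(real \<Rightarrow> real \<Rightarrow> ennreal) \<Rightarrow> ennreal" where
  "plane_nn_integral f = (\<integral>\<^sup>+y. \<integral>\<^sup>+x. f x y \<partial>lborel \<partial>lborel)"

lemma plane_nn_integral_swap:
  assumes "case_prod f \<in> borel_measurable (borel \<Otimes>\<^sub>M borel)"
  shows "plane_nn_integral f = (\<integral>\<^sup>+x. \<integral>\<^sup>+y. f x y \<partial>lborel \<partial>lborel)"
  unfolding plane_nn_integral_def
  by (rule lborel_pair.Fubini') (use assms in \<open>simp add: measurable_def space_pair_measure sets_pair_measure\<close>)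

lemma nn_integral_lborel_shift:
  fixes f :: "real \<Rightarrow> ennreal"
  assumes "f \<in> borel_measurable borel"
  shows "(\<integral>\<^sup>+x. f (x + c) \<partial>lborel) = (\<integral>\<^sup>+x. f x \<partial>lborel)"
  using nn_integral_real_affine[of f 1 c] assms by (simp add: add.commute)

lemma plane_nn_integral_shear_fst:
  assumes f: "case_prod f \<in> borel_measurable (borel \<Otimes>\<^sub>M borel)"
  shows "plane_nn_integral (\<lambda>x y. f (x + a * y) y) = plane_nn_integral f"
  unfolding plane_nn_integral_def
  by (intro nn_integral_cong nn_integral_lborel_shift borel_measurable_compose_binary[OF f]) simp_all

lemma plane_nn_integral_shear_snd:
  assumes f: "case_prod f \<in> borel_measurable (borel \<Otimes>\<^sub>M borel)"
  shows "plane_nn_integral (\<lambda>x y. f x (y + b * x)) = plane_nn_integral f"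
proof -
  have "case_prod (\<lambda>x y. f x (y + b * x)) \<in> borel_measurable (borel \<Otimes>\<^sub>M borel)"
    unfolding split_beta' by (rule borel_measurable_compose_binary[OF f]) measurable
  then have "plane_nn_integral (\<lambda>x y. f x (y + b * x)) = (\<integral>\<^sup>+x. \<integral>\<^sup>+y. f x (y + b * x) \<partial>lborel \<partial>lborel)"
    by (rule plane_nn_integral_swap)
  also have "\<dots> = (\<integral>\<^sup>+x. \<integral>\<^sup>+y. f x y \<partial>lborel \<partial>lborel)"
    by (intro nn_integral_cong nn_integral_lborel_shift borel_measurable_compose_binary[OF f]) simp_all
  also have "\<dots> = plane_nn_integral f"
    by (rule plane_nn_integral_swap[OF f, symmetric])
  finally show ?thesis .
qed

text \<open>A rotation with \<open>c \<noteq> -1\<close> is the product of three shears, with \<open>t = s / (1 + c)\<close>.\<close>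
lemma plane_nn_integral_rotation_not_half_turn:
  assumes f: "case_prod f \<in> borel_measurable (borel \<Otimes>\<^sub>M borel)"
    and cs: "c\<^sup>2 + s\<^sup>2 = 1" and c: "c \<noteq> -1"
  shows "plane_nn_integral (\<lambda>x y. f (c * x - s * y) (s * x + c * y)) = plane_nn_integral f"
proof -
  have "\<bar>c\<bar> \<le> 1"
    using cs by (metis abs_le_square_iff abs_one le_add_same_cancel1 one_power2 zero_le_power2)
  with c have c1: "1 + c > 0" by linarith
  define t where "t = s / (1 + c)"
  have ts: "t * s = 1 - c"
  proof -
    have "t * s * (1 + c) = s\<^sup>2"
      using c1 by (simp add: t_def power2_eq_square)
    also have "\<dots> = (1 - c) * (1 + c)"
      using cs by (simp add: power2_eq_square algebra_simps)
    finally have "t * s * (1 + c) = (1 - c) * (1 + c)" .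
    then show ?thesis using c1 by simp
  qed
  have tc: "t * (1 + c) = s" using c1 by (simp add: t_def)
  define f1 where "f1 x y = f (x + (-t) * y) y" for x y
  define f2 where "f2 x y = f1 x (y + s * x)" for x y
  have m1: "case_prod f1 \<in> borel_measurable (borel \<Otimes>\<^sub>M borel)"
    unfolding f1_def by (rule borel_measurable_case_prod_compose_binary[OF f]) measurable
  have m2: "case_prod f2 \<in> borel_measurable (borel \<Otimes>\<^sub>M borel)"
    unfolding f2_def by (rule borel_measurable_case_prod_compose_binary[OF m1]) measurable
  have rot: "(\<lambda>x y. f (c * x - s * y) (s * x + c * y)) = (\<lambda>x y. f2 (x + (-t) * y) y)"
  proof (intro ext)
    fix x y
    have "y + s * (x + - t * y) = s * x + y * (1 - t * s)"
      by (simp add: algebra_simps)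
    also have "\<dots> = s * x + c * y"
      unfolding ts by simp
    finally have snd_eq: "y + s * (x + - t * y) = s * x + c * y" .
    have "x + - t * y + - t * (s * x + c * y) = x * (1 - t * s) - y * (t * (1 + c))"
      by (simp add: algebra_simps)
    also have "\<dots> = c * x - s * y"
      unfolding ts tc by simp
    finally have fst_eq: "x + - t * y + - t * (s * x + c * y) = c * x - s * y" .
    show "f (c * x - s * y) (s * x + c * y) = f2 (x + (-t) * y) y"
      unfolding f2_def f1_def snd_eq fst_eq ..
  qed
  have "plane_nn_integral (\<lambda>x y. f (c * x - s * y) (s * x + c * y)) = plane_nn_integral f2"
    unfolding rot by (rule plane_nn_integral_shear_fst[OF m2])
  also have "\<dots> = plane_nn_integral f1" unfolding f2_def by (rule plane_nn_integral_shear_snd[OF m1])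
  also have "\<dots> = plane_nn_integral f" unfolding f1_def by (rule plane_nn_integral_shear_fst[OF f])
  finally show ?thesis .
qed

text \<open>The half turn is the square of the quarter turn.\<close>
lemma plane_nn_integral_rotation:
  assumes f: "case_prod f \<in> borel_measurable (borel \<Otimes>\<^sub>M borel)" and cs: "c\<^sup>2 + s\<^sup>2 = 1"
  shows "plane_nn_integral (\<lambda>x y. f (c * x - s * y) (s * x + c * y)) = plane_nn_integral f"
proof (cases "c = -1")
  case True
  then have "s = 0" using cs by simp
  define g where "g x y = f (- y) x" for x y
  have g: "case_prod g \<in> borel_measurable (borel \<Otimes>\<^sub>M borel)"
    unfolding g_def by (rule borel_measurable_case_prod_compose_binary[OF f]) measurable
  have "plane_nn_integral (\<lambda>x y. f (c * x - s * y) (s * x + c * y))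
      = plane_nn_integral (\<lambda>x y. g (0 * x - 1 * y) (1 * x + 0 * y))"
    using True \<open>s = 0\<close> by (simp add: g_def)
  also have "\<dots> = plane_nn_integral g"
    by (rule plane_nn_integral_rotation_not_half_turn[OF g]) simp_all
  also have "\<dots> = plane_nn_integral (\<lambda>x y. f (0 * x - 1 * y) (1 * x + 0 * y))"
    by (simp add: g_def[abs_def])
  also have "\<dots> = plane_nn_integral f"
    by (rule plane_nn_integral_rotation_not_half_turn[OF f]) simp_all
  finally show ?thesis .
qed (rule plane_nn_integral_rotation_not_half_turn[OF f cs])

abbreviation centered_normal :: "real \<Rightarrow> real measure" where
  "centered_normal \<sigma> \<equiv> density lborel (\<lambda>x. ennreal (normal_density 0 \<sigma> x))"

lemma normal_density_mult:
  "normal_density 0 \<sigma> t * normal_density 0 \<sigma> y = exp (- (t\<^sup>2 + y\<^sup>2) / (2 * \<sigma>\<^sup>2)) / (2 * pi * \<sigma>\<^sup>2)"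
proof -
  have "exp (- (t\<^sup>2) / (2 * \<sigma>\<^sup>2)) * exp (- (y\<^sup>2) / (2 * \<sigma>\<^sup>2)) = exp (- (t\<^sup>2 + y\<^sup>2) / (2 * \<sigma>\<^sup>2))"
    by (simp add: exp_add[symmetric] diff_divide_distrib)
  then show ?thesis
    by (simp add: normal_density_def)
qed

lemma nn_integral_centered_normal_pair:
  assumes sig: "\<sigma> > 0" and F: "case_prod F \<in> borel_measurable (borel \<Otimes>\<^sub>M borel)"
  shows "(\<integral>\<^sup>+y. \<integral>\<^sup>+t. F t y \<partial>centered_normal \<sigma> \<partial>centered_normal \<sigma>)
     = plane_nn_integral (\<lambda>t y. ennreal (normal_density 0 \<sigma> t * normal_density 0 \<sigma> y) * F t y)"
proof -
  interpret N: prob_space "centered_normal \<sigma>" by (rule prob_space_normal_density[OF sig])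
  have "(\<lambda>(y, t). F t y) \<in> borel_measurable (centered_normal \<sigma> \<Otimes>\<^sub>M centered_normal \<sigma>)"
    unfolding split_beta' by (rule borel_measurable_compose_binary[OF F]) measurable
  from N.borel_measurable_nn_integral[OF this]
  have [measurable]: "(\<lambda>y. \<integral>\<^sup>+t. F t y \<partial>centered_normal \<sigma>) \<in> borel_measurable borel"
    by (simp add: measurable_def)
  have [measurable]: "(\<lambda>t. F t y) \<in> borel_measurable borel" for y
    by (rule borel_measurable_compose_binary[OF F]) measurable
  have "(\<integral>\<^sup>+y. \<integral>\<^sup>+t. F t y \<partial>centered_normal \<sigma> \<partial>centered_normal \<sigma>)
     = (\<integral>\<^sup>+y. ennreal (normal_density 0 \<sigma> y) * (\<integral>\<^sup>+t. F t y \<partial>centered_normal \<sigma>) \<partial>lborel)"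
    by (rule nn_integral_density) simp_all
  also have "\<dots> = (\<integral>\<^sup>+y. ennreal (normal_density 0 \<sigma> y) *
          (\<integral>\<^sup>+t. ennreal (normal_density 0 \<sigma> t) * F t y \<partial>lborel) \<partial>lborel)"
    by (simp add: nn_integral_density)
  also have "\<dots> = plane_nn_integral (\<lambda>t y. ennreal (normal_density 0 \<sigma> t * normal_density 0 \<sigma> y) * F t y)"
    unfolding plane_nn_integral_def
    by (intro nn_integral_cong, subst nn_integral_cmult[symmetric])
       (auto intro!: nn_integral_cong simp: ennreal_mult' mult_ac)
  finally show ?thesis .
qed

lemma nn_integral_centered_normal_pair_rotate:
  assumes sig: "\<sigma> > 0" and g: "case_prod g \<in> borel_measurable (borel \<Otimes>\<^sub>M borel)"
  shows "(\<integral>\<^sup>+y. \<integral>\<^sup>+t. g (\<alpha> * t + \<beta> * y) (t\<^sup>2 + y\<^sup>2) \<partial>centered_normal \<sigma> \<partial>centered_normal \<sigma>)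
       = (\<integral>\<^sup>+y. \<integral>\<^sup>+t. g (sqrt (\<alpha>\<^sup>2 + \<beta>\<^sup>2) * t) (t\<^sup>2 + y\<^sup>2) \<partial>centered_normal \<sigma> \<partial>centered_normal \<sigma>)"
proof (cases "\<alpha>\<^sup>2 + \<beta>\<^sup>2 = 0")
  case False
  define \<gamma> where "\<gamma> = sqrt (\<alpha>\<^sup>2 + \<beta>\<^sup>2)"
  have \<gamma>: "\<gamma> > 0" "\<gamma>\<^sup>2 = \<alpha>\<^sup>2 + \<beta>\<^sup>2"
    using False by (simp_all add: \<gamma>_def add_nonneg_nonneg order_le_neq_trans)
  define c s where "c = \<alpha> / \<gamma>" and "s = - \<beta> / \<gamma>"
  have cs: "c\<^sup>2 + s\<^sup>2 = 1"
    using \<gamma> False by (simp add: c_def s_def power_divide add_divide_distrib[symmetric])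
  define h where "h x y = ennreal (exp (- (x\<^sup>2 + y\<^sup>2) / (2 * \<sigma>\<^sup>2)) / (2 * pi * \<sigma>\<^sup>2)) * g (\<gamma> * x) (x\<^sup>2 + y\<^sup>2)"
    for x y
  have "case_prod (\<lambda>x y. g (\<gamma> * x) (x\<^sup>2 + y\<^sup>2)) \<in> borel_measurable (borel \<Otimes>\<^sub>M borel)"
    by (rule borel_measurable_case_prod_compose_binary[OF g]) measurable
  then have h_meas: "case_prod h \<in> borel_measurable (borel \<Otimes>\<^sub>M borel)"
    unfolding h_def by measurable
  have h_rot: "h (c * t - s * y) (s * t + c * y)
      = ennreal (normal_density 0 \<sigma> t * normal_density 0 \<sigma> y) * g (\<alpha> * t + \<beta> * y) (t\<^sup>2 + y\<^sup>2)"
    for t y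
  proof -
    have "(c * t - s * y)\<^sup>2 + (s * t + c * y)\<^sup>2 = (c\<^sup>2 + s\<^sup>2) * (t\<^sup>2 + y\<^sup>2)"
      by (simp add: power2_eq_square algebra_simps)
    moreover have "\<gamma> * (c * t - s * y) = \<alpha> * t + \<beta> * y"
      using \<gamma> by (simp add: c_def s_def algebra_simps)
    ultimately show ?thesis
      by (simp add: h_def cs normal_density_mult)
  qed
  have "(\<integral>\<^sup>+y. \<integral>\<^sup>+t. g (\<alpha> * t + \<beta> * y) (t\<^sup>2 + y\<^sup>2) \<partial>centered_normal \<sigma> \<partial>centered_normal \<sigma>)
      = plane_nn_integral (\<lambda>t y. h (c * t - s * y) (s * t + c * y))"
    unfolding h_rot
    by (rule nn_integral_centered_normal_pair[OF sig borel_measurable_case_prod_compose_binary[OF g]]) measurable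
  also have "\<dots> = plane_nn_integral h"
    by (rule plane_nn_integral_rotation[OF h_meas cs])
  also have "\<dots> = (\<integral>\<^sup>+y. \<integral>\<^sup>+t. g (\<gamma> * t) (t\<^sup>2 + y\<^sup>2) \<partial>centered_normal \<sigma> \<partial>centered_normal \<sigma>)"
    unfolding h_def normal_density_mult[symmetric]
    by (rule nn_integral_centered_normal_pair[OF sig borel_measurable_case_prod_compose_binary[OF g], symmetric])
       measurable
  finally show ?thesis unfolding \<gamma>_def .
qed (simp add: add_nonneg_eq_0_iff)

lemma nn_integral_centered_normal_reflect:
  assumes [measurable]: "F \<in> borel_measurable borel"
  shows "(\<integral>\<^sup>+t. F (- t) \<partial>centered_normal \<sigma>) = (\<integral>\<^sup>+t. F t \<partial>centered_normal \<sigma>)"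
proof -
  have "(\<integral>\<^sup>+t. F (- t) \<partial>centered_normal \<sigma>)
      = (\<integral>\<^sup>+t. ennreal (normal_density 0 \<sigma> (- t)) * F (- t) \<partial>lborel)"
    by (simp add: nn_integral_density normal_density_def)
  also have "\<dots> = (\<integral>\<^sup>+t. F t \<partial>centered_normal \<sigma>)"
    using nn_integral_real_affine[of "\<lambda>t. ennreal (normal_density 0 \<sigma> t) * F t" "-1" 0]
    by (simp add: nn_integral_density)
  finally show ?thesis .
qed

definition sqnorm :: "nat \<Rightarrow> (nat \<Rightarrow> real) \<Rightarrow> real" where
  "sqnorm m x = (\<Sum>i<m. (x i)\<^sup>2)"

lemma sqnorm_nonneg: "sqnorm m x \<ge> 0"
  by (simp add: sqnorm_def sum_nonneg)

lemma vnorm_power2: "(vnorm m x)\<^sup>2 = sqnorm m x"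
  by (simp add: vnorm_def sqnorm_def sum_nonneg)

lemma vinner_fun_upd: "vinner (Suc m) (x(m := y)) u = vinner m x u + u m * y"
  unfolding vinner_def by (simp add: mult.commute)

lemma sqnorm_fun_upd: "sqnorm (Suc m) (x(m := y)) = sqnorm m x + y\<^sup>2"
  unfolding sqnorm_def by simp

lemma prob_space_gauss_vec: "\<sigma> > 0 \<Longrightarrow> prob_space (gauss_vec m \<sigma>)"
  unfolding gauss_vec_def by (intro prob_space_PiM prob_space_normal_density)

lemma borel_measurable_vinner [measurable]: "(\<lambda>x. vinner m x u) \<in> borel_measurable (gauss_vec m \<sigma>)"
  unfolding vinner_def gauss_vec_def by measurable

lemma borel_measurable_sqnorm [measurable]: "sqnorm m \<in> borel_measurable (gauss_vec m \<sigma>)"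
  unfolding sqnorm_def gauss_vec_def by measurable

lemma nn_integral_gauss_vec_Suc:
  assumes sig: "\<sigma> > 0" and F: "F \<in> borel_measurable (gauss_vec (Suc m) \<sigma>)"
  shows "(\<integral>\<^sup>+x. F x \<partial>gauss_vec (Suc m) \<sigma>)
       = (\<integral>\<^sup>+x. \<integral>\<^sup>+y. F (x(m := y)) \<partial>centered_normal \<sigma> \<partial>gauss_vec m \<sigma>)"
proof -
  interpret product_prob_space "\<lambda>_::nat. centered_normal \<sigma>"
    by (intro product_prob_spaceI prob_space_normal_density sig)
  show ?thesis
    using product_nn_integral_insert[of "{..<m}" m F] F
    by (simp add: gauss_vec_def lessThan_Suc)
qed

lemma borel_measurable_nn_integral_centered_normal:
  assumes sig: "\<sigma> > 0" and g: "case_prod g \<in> borel_measurable (borel \<Otimes>\<^sub>M borel)"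
    and [measurable]: "a \<in> borel_measurable M" "b \<in> borel_measurable M"
  shows "(\<lambda>z. \<integral>\<^sup>+t. g (c * t + a z) (t\<^sup>2 + b z) \<partial>centered_normal \<sigma>) \<in> borel_measurable M"
proof -
  interpret N: prob_space "centered_normal \<sigma>" by (rule prob_space_normal_density[OF sig])
  have "(\<lambda>(z, t). g (c * t + a z) (t\<^sup>2 + b z)) \<in> borel_measurable (M \<Otimes>\<^sub>M centered_normal \<sigma>)"
    unfolding split_beta' by (rule borel_measurable_compose_binary[OF g]) measurable
  then show ?thesis by (rule N.borel_measurable_nn_integral)
qed

lemma nn_integral_gauss_vec_swap:
  assumes sig: "\<sigma> > 0"
    and F: "case_prod F \<in> borel_measurable (gauss_vec m \<sigma> \<Otimes>\<^sub>M centered_normal \<sigma>)"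
  shows "(\<integral>\<^sup>+x. \<integral>\<^sup>+y. F x y \<partial>centered_normal \<sigma> \<partial>gauss_vec m \<sigma>)
       = (\<integral>\<^sup>+y. \<integral>\<^sup>+x. F x y \<partial>gauss_vec m \<sigma> \<partial>centered_normal \<sigma>)"
proof -
  interpret pair_sigma_finite "gauss_vec m \<sigma>" "centered_normal \<sigma>"
    by (intro pair_sigma_finite.intro prob_space_imp_sigma_finite prob_space_gauss_vec
        prob_space_normal_density sig)
  show ?thesis by (rule Fubini'[OF F, symmetric])
qed

lemma nn_integral_gauss_vec_Suc_rotate_last:
  assumes sig: "\<sigma> > 0" and g: "case_prod g \<in> borel_measurable (borel \<Otimes>\<^sub>M borel)"
  shows "(\<integral>\<^sup>+x. \<integral>\<^sup>+t. g (\<alpha> * t + vinner (Suc m) x u) (t\<^sup>2 + sqnorm (Suc m) x)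
            \<partial>centered_normal \<sigma> \<partial>gauss_vec (Suc m) \<sigma>)
     = (\<integral>\<^sup>+x. \<integral>\<^sup>+y. \<integral>\<^sup>+t. g (sqrt (\<alpha>\<^sup>2 + (u m)\<^sup>2) * t + vinner m x u) (t\<^sup>2 + (sqnorm m x + y\<^sup>2))
            \<partial>centered_normal \<sigma> \<partial>centered_normal \<sigma> \<partial>gauss_vec m \<sigma>)"
proof -
  have "(\<integral>\<^sup>+x. \<integral>\<^sup>+t. g (\<alpha> * t + vinner (Suc m) x u) (t\<^sup>2 + sqnorm (Suc m) x)
            \<partial>centered_normal \<sigma> \<partial>gauss_vec (Suc m) \<sigma>)
     = (\<integral>\<^sup>+x. \<integral>\<^sup>+y. \<integral>\<^sup>+t. g (\<alpha> * t + u m * y + vinner m x u) (t\<^sup>2 + y\<^sup>2 + sqnorm m x)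
            \<partial>centered_normal \<sigma> \<partial>centered_normal \<sigma> \<partial>gauss_vec m \<sigma>)"
    by (subst nn_integral_gauss_vec_Suc[OF sig borel_measurable_nn_integral_centered_normal[OF sig g]])
       (simp_all add: vinner_fun_upd sqnorm_fun_upd algebra_simps)
  also have "\<dots> = (\<integral>\<^sup>+x. \<integral>\<^sup>+y. \<integral>\<^sup>+t. g (sqrt (\<alpha>\<^sup>2 + (u m)\<^sup>2) * t + vinner m x u) (t\<^sup>2 + (sqnorm m x + y\<^sup>2))
            \<partial>centered_normal \<sigma> \<partial>centered_normal \<sigma> \<partial>gauss_vec m \<sigma>)"
  proof (rule nn_integral_cong)
    fix x
    have "case_prod (\<lambda>a b. g (a + vinner m x u) (b + sqnorm m x)) \<in> borel_measurable (borel \<Otimes>\<^sub>M borel)"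
      by (rule borel_measurable_case_prod_compose_binary[OF g]) measurable
    from nn_integral_centered_normal_pair_rotate[OF sig this, of \<alpha> "u m"]
    show "(\<integral>\<^sup>+y. \<integral>\<^sup>+t. g (\<alpha> * t + u m * y + vinner m x u) (t\<^sup>2 + y\<^sup>2 + sqnorm m x)
            \<partial>centered_normal \<sigma> \<partial>centered_normal \<sigma>)
        = (\<integral>\<^sup>+y. \<integral>\<^sup>+t. g (sqrt (\<alpha>\<^sup>2 + (u m)\<^sup>2) * t + vinner m x u) (t\<^sup>2 + (sqnorm m x + y\<^sup>2))
            \<partial>centered_normal \<sigma> \<partial>centered_normal \<sigma>)"
      by (simp add: algebra_simps)
  qed
  finally show ?thesis .
qed

lemma nn_integral_gauss_vec_Suc_sqnorm:
  assumes sig: "\<sigma> > 0" and g: "case_prod g \<in> borel_measurable (borel \<Otimes>\<^sub>M borel)"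
  shows "(\<integral>\<^sup>+x. \<integral>\<^sup>+t. g (\<gamma> * t + a) (t\<^sup>2 + sqnorm (Suc m) x) \<partial>centered_normal \<sigma> \<partial>gauss_vec (Suc m) \<sigma>)
     = (\<integral>\<^sup>+y. \<integral>\<^sup>+x. \<integral>\<^sup>+t. g (\<gamma> * t + a) (t\<^sup>2 + (sqnorm m x + y\<^sup>2))
            \<partial>centered_normal \<sigma> \<partial>gauss_vec m \<sigma> \<partial>centered_normal \<sigma>)"
proof -
  have "(\<lambda>x. \<integral>\<^sup>+t. g (\<gamma> * t + a) (t\<^sup>2 + sqnorm (Suc m) x) \<partial>centered_normal \<sigma>)
      \<in> borel_measurable (gauss_vec (Suc m) \<sigma>)"
    by (rule borel_measurable_nn_integral_centered_normal[OF sig g]) measurable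
  from nn_integral_gauss_vec_Suc[OF sig this]
  have "(\<integral>\<^sup>+x. \<integral>\<^sup>+t. g (\<gamma> * t + a) (t\<^sup>2 + sqnorm (Suc m) x) \<partial>centered_normal \<sigma> \<partial>gauss_vec (Suc m) \<sigma>)
     = (\<integral>\<^sup>+x. \<integral>\<^sup>+y. \<integral>\<^sup>+t. g (\<gamma> * t + a) (t\<^sup>2 + (sqnorm m x + y\<^sup>2))
            \<partial>centered_normal \<sigma> \<partial>centered_normal \<sigma> \<partial>gauss_vec m \<sigma>)"
    by (simp add: sqnorm_fun_upd)
  also have "\<dots> = (\<integral>\<^sup>+y. \<integral>\<^sup>+x. \<integral>\<^sup>+t. g (\<gamma> * t + a) (t\<^sup>2 + (sqnorm m x + y\<^sup>2))
            \<partial>centered_normal \<sigma> \<partial>gauss_vec m \<sigma> \<partial>centered_normal \<sigma>)"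
    by (rule nn_integral_gauss_vec_swap[OF sig], unfold split_beta')
       (rule borel_measurable_nn_integral_centered_normal[OF sig g]; measurable)
  finally show ?thesis .
qed

text \<open>The pair \<open>(\<langle>X, u\<rangle>, \<parallel>X\<parallel>\<^sup>2)\<close> of a Gaussian vector \<open>X\<close> has the same law as
  \<open>(\<parallel>u\<parallel> t, t\<^sup>2 + \<parallel>X'\<parallel>\<^sup>2)\<close>: rotate the coordinates into \<open>t\<close> one at a time.\<close>
lemma nn_integral_gauss_vec_rotate_inner:
  assumes sig: "\<sigma> > 0" and "case_prod g \<in> borel_measurable (borel \<Otimes>\<^sub>M borel)"
  shows "(\<integral>\<^sup>+x. \<integral>\<^sup>+t. g (\<alpha> * t + vinner m x u) (t\<^sup>2 + sqnorm m x) \<partial>centered_normal \<sigma> \<partial>gauss_vec m \<sigma>)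
       = (\<integral>\<^sup>+x. \<integral>\<^sup>+t. g (sqrt (\<alpha>\<^sup>2 + sqnorm m u) * t) (t\<^sup>2 + sqnorm m x)
            \<partial>centered_normal \<sigma> \<partial>gauss_vec m \<sigma>)"
  using assms(2)
proof (induction m arbitrary: \<alpha> g)
  case (0 \<alpha> g)
  have [measurable]: "(\<lambda>t. g (\<alpha> * t) (t\<^sup>2)) \<in> borel_measurable borel"
    by (rule borel_measurable_compose_binary[OF "0.prems"]) measurable
  have "(\<integral>\<^sup>+t. g (\<alpha> * t) (t\<^sup>2) \<partial>centered_normal \<sigma>) = (\<integral>\<^sup>+t. g (\<bar>\<alpha>\<bar> * t) (t\<^sup>2) \<partial>centered_normal \<sigma>)"
    using nn_integral_centered_normal_reflect[of "\<lambda>t. g (\<alpha> * t) (t\<^sup>2)" \<sigma>]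
    by (cases "\<alpha> \<ge> 0") simp_all
  then show ?case by (simp add: vinner_def sqnorm_def)
next
  case (Suc m \<alpha> g)
  note g = Suc.prems
  define \<gamma>\<^sub>1 where "\<gamma>\<^sub>1 = sqrt (\<alpha>\<^sup>2 + (u m)\<^sup>2)"
  have \<gamma>: "sqrt (\<alpha>\<^sup>2 + sqnorm (Suc m) u) = sqrt (\<gamma>\<^sub>1\<^sup>2 + sqnorm m u)"
    by (simp add: \<gamma>\<^sub>1_def sqnorm_def add.assoc)
  have "(\<integral>\<^sup>+x. \<integral>\<^sup>+t. g (\<alpha> * t + vinner (Suc m) x u) (t\<^sup>2 + sqnorm (Suc m) x)
            \<partial>centered_normal \<sigma> \<partial>gauss_vec (Suc m) \<sigma>)
     = (\<integral>\<^sup>+x. \<integral>\<^sup>+y. \<integral>\<^sup>+t. g (\<gamma>\<^sub>1 * t + vinner m x u) (t\<^sup>2 + (sqnorm m x + y\<^sup>2))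
            \<partial>centered_normal \<sigma> \<partial>centered_normal \<sigma> \<partial>gauss_vec m \<sigma>)"
    unfolding \<gamma>\<^sub>1_def by (rule nn_integral_gauss_vec_Suc_rotate_last[OF sig g])
  also have "\<dots> = (\<integral>\<^sup>+y. \<integral>\<^sup>+x. \<integral>\<^sup>+t. g (\<gamma>\<^sub>1 * t + vinner m x u) (t\<^sup>2 + (sqnorm m x + y\<^sup>2))
            \<partial>centered_normal \<sigma> \<partial>gauss_vec m \<sigma> \<partial>centered_normal \<sigma>)"
    by (rule nn_integral_gauss_vec_swap[OF sig], unfold split_beta')
       (rule borel_measurable_nn_integral_centered_normal[OF sig g]; measurable)
  also have "\<dots> = (\<integral>\<^sup>+y. \<integral>\<^sup>+x. \<integral>\<^sup>+t. g (sqrt (\<alpha>\<^sup>2 + sqnorm (Suc m) u) * t) (t\<^sup>2 + (sqnorm m x + y\<^sup>2))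
            \<partial>centered_normal \<sigma> \<partial>gauss_vec m \<sigma> \<partial>centered_normal \<sigma>)"
  proof (rule nn_integral_cong)
    fix y
    have "case_prod (\<lambda>a b. g a (b + y\<^sup>2)) \<in> borel_measurable (borel \<Otimes>\<^sub>M borel)"
      by (rule borel_measurable_case_prod_compose_binary[OF g]) measurable
    from Suc.IH[OF this, of \<gamma>\<^sub>1]
    show "(\<integral>\<^sup>+x. \<integral>\<^sup>+t. g (\<gamma>\<^sub>1 * t + vinner m x u) (t\<^sup>2 + (sqnorm m x + y\<^sup>2))
            \<partial>centered_normal \<sigma> \<partial>gauss_vec m \<sigma>)
        = (\<integral>\<^sup>+x. \<integral>\<^sup>+t. g (sqrt (\<alpha>\<^sup>2 + sqnorm (Suc m) u) * t) (t\<^sup>2 + (sqnorm m x + y\<^sup>2))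
            \<partial>centered_normal \<sigma> \<partial>gauss_vec m \<sigma>)"
      by (simp add: \<gamma> add.assoc)
  qed
  also have "\<dots> = (\<integral>\<^sup>+x. \<integral>\<^sup>+t. g (sqrt (\<alpha>\<^sup>2 + sqnorm (Suc m) u) * t) (t\<^sup>2 + sqnorm (Suc m) x)
            \<partial>centered_normal \<sigma> \<partial>gauss_vec (Suc m) \<sigma>)"
    using nn_integral_gauss_vec_Suc_sqnorm[OF sig g, where a = 0] by simp
  finally show ?case .
qed

lemma nn_integral_gauss_vec_rotate:
  assumes sig: "\<sigma> > 0" and g: "case_prod g \<in> borel_measurable (borel \<Otimes>\<^sub>M borel)"
  shows "(\<integral>\<^sup>+x. g (vinner (Suc k) x u) (sqnorm (Suc k) x) \<partial>gauss_vec (Suc k) \<sigma>)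
       = (\<integral>\<^sup>+x. \<integral>\<^sup>+t. g (vnorm (Suc k) u * t) (t\<^sup>2 + sqnorm k x) \<partial>centered_normal \<sigma> \<partial>gauss_vec k \<sigma>)"
proof -
  have "(\<lambda>x. g (vinner (Suc k) x u) (sqnorm (Suc k) x)) \<in> borel_measurable (gauss_vec (Suc k) \<sigma>)"
    by (rule borel_measurable_compose_binary[OF g]) measurable
  from nn_integral_gauss_vec_Suc[OF sig this]
  have "(\<integral>\<^sup>+x. g (vinner (Suc k) x u) (sqnorm (Suc k) x) \<partial>gauss_vec (Suc k) \<sigma>)
      = (\<integral>\<^sup>+x. \<integral>\<^sup>+t. g (u k * t + vinner k x u) (t\<^sup>2 + sqnorm k x) \<partial>centered_normal \<sigma> \<partial>gauss_vec k \<sigma>)"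
    by (simp add: vinner_fun_upd sqnorm_fun_upd add.commute)
  also have "\<dots> = (\<integral>\<^sup>+x. \<integral>\<^sup>+t. g (sqrt ((u k)\<^sup>2 + sqnorm k u) * t) (t\<^sup>2 + sqnorm k x)
            \<partial>centered_normal \<sigma> \<partial>gauss_vec k \<sigma>)"
    by (rule nn_integral_gauss_vec_rotate_inner[OF sig g])
  also have "sqrt ((u k)\<^sup>2 + sqnorm k u) = vnorm (Suc k) u"
    by (simp add: vnorm_def sqnorm_def)
  finally show ?thesis .
qed

lemma nn_integral_centered_normal_square:
  assumes sig: "\<sigma> > 0"
  shows "(\<integral>\<^sup>+t. ennreal (t\<^sup>2) \<partial>centered_normal \<sigma>) = ennreal (\<sigma>\<^sup>2)"
proof -
  have "has_bochner_integral lborel (\<lambda>x. normal_density 0 \<sigma> x * (x - 0) ^ (2 * 1))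
      (fact (2 * 1) / ((2 / \<sigma>\<^sup>2) ^ 1 * fact 1))"
    by (rule normal_moment_even[OF sig])
  then have hb: "has_bochner_integral lborel (\<lambda>x. normal_density 0 \<sigma> x * x\<^sup>2) (\<sigma>\<^sup>2)"
    using sig by simp
  have "(\<integral>\<^sup>+t. ennreal (t\<^sup>2) \<partial>centered_normal \<sigma>) = (\<integral>\<^sup>+t. ennreal (normal_density 0 \<sigma> t * t\<^sup>2) \<partial>lborel)"
    by (simp add: nn_integral_density ennreal_mult')
  also have "\<dots> = ennreal (\<sigma>\<^sup>2)"
    using nn_integral_eq_integral[OF integrable.intros[OF hb]] has_bochner_integral_integral_eq[OF hb]
    by simp
  finally show ?thesis .
qed

lemma normal_density_le: "\<sigma> > 0 \<Longrightarrow> normal_density 0 \<sigma> t \<le> 1 / (2 * \<sigma>)"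
proof -
  assume sig: "\<sigma> > 0"
  have "(2 * \<sigma>)\<^sup>2 \<le> 2 * pi * \<sigma>\<^sup>2"
    using pi_gt3 sig by (simp add: power2_eq_square)
  then have "2 * \<sigma> \<le> sqrt (2 * pi * \<sigma>\<^sup>2)"
    by (rule real_le_rsqrt)
  moreover have "exp (- (t\<^sup>2) / (2 * \<sigma>\<^sup>2)) \<le> 1" by simp
  ultimately have "exp (- (t\<^sup>2) / (2 * \<sigma>\<^sup>2)) / sqrt (2 * pi * \<sigma>\<^sup>2) \<le> 1 / (2 * \<sigma>)"
    using sig by (intro frac_le) simp_all
  then show ?thesis by (simp add: normal_density_def)
qed

lemma emeasure_centered_normal_interval_le:
  assumes sig: "\<sigma> > 0" and a: "a \<ge> 0"
  shows "emeasure (centered_normal \<sigma>) {-a..a} \<le> ennreal (a / \<sigma>)"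
proof -
  have "emeasure (centered_normal \<sigma>) {-a..a}
      = (\<integral>\<^sup>+t. ennreal (normal_density 0 \<sigma> t) * indicator {-a..a} t \<partial>lborel)"
    by (simp add: emeasure_density)
  also have "\<dots> \<le> (\<integral>\<^sup>+t. ennreal (1 / (2 * \<sigma>)) * indicator {-a..a} t \<partial>lborel)"
    by (intro nn_integral_mono mult_right_mono ennreal_leI normal_density_le[OF sig]) simp
  also have "\<dots> = ennreal (a / \<sigma>)"
    using sig a by (simp add: nn_integral_cmult ennreal_mult'[symmetric])
  finally show ?thesis .
qed

lemma abs_le_quadratic_cases:
  fixes \<gamma> t r :: real
  assumes \<gamma>: "\<gamma> > 0" and r: "r \<ge> 0" and h: "\<bar>\<gamma> * t\<bar> \<le> 3/2 * (t\<^sup>2 + r)"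
  shows "1 \<le> 9 / \<gamma>\<^sup>2 * t\<^sup>2 \<or> \<bar>t\<bar> \<le> 3 * r / \<gamma>"
proof (rule disjCI)
  assume "\<not> \<bar>t\<bar> \<le> 3 * r / \<gamma>"
  then have "3 * r < \<gamma> * \<bar>t\<bar>" using \<gamma> by (simp add: field_simps)
  moreover have "\<gamma> * \<bar>t\<bar> \<le> 3/2 * (\<bar>t\<bar> * \<bar>t\<bar> + r)"
    using h \<gamma> by (simp add: abs_mult power2_eq_square)
  ultimately have "\<gamma> * \<bar>t\<bar> < 3 * \<bar>t\<bar> * \<bar>t\<bar>" by (simp add: algebra_simps)
  then have "\<gamma> < 3 * \<bar>t\<bar>"
    by (simp add: mult_less_cancel_right)
  then have "\<gamma>\<^sup>2 < (3 * \<bar>t\<bar>)\<^sup>2"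
    using \<gamma> by (intro power_strict_mono) simp_all
  then show "1 \<le> 9 / \<gamma>\<^sup>2 * t\<^sup>2"
    using \<gamma> by (simp add: field_simps power_mult_distrib)
qed

lemma nn_integral_centered_normal_ratio_le:
  assumes sig: "\<sigma> > 0" and \<gamma>: "\<gamma> > 0" and r: "r \<ge> 0"
  shows "(\<integral>\<^sup>+t. (if \<bar>\<gamma> * t\<bar> \<le> 3/2 * (t\<^sup>2 + r) then 1 else 0) \<partial>centered_normal \<sigma>)
       \<le> ennreal (3 * r / (\<gamma> * \<sigma>)) + ennreal (9 * \<sigma>\<^sup>2 / \<gamma>\<^sup>2)"
proof -
  let ?I = "{- (3 * r / \<gamma>)..3 * r / \<gamma>}"
  have pointwise: "(if \<bar>\<gamma> * t\<bar> \<le> 3/2 * (t\<^sup>2 + r) then 1 else 0)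
      \<le> indicator ?I t + ennreal (9 / \<gamma>\<^sup>2) * ennreal (t\<^sup>2)" for t
  proof (cases "\<bar>\<gamma> * t\<bar> \<le> 3/2 * (t\<^sup>2 + r)")
    case True
    from abs_le_quadratic_cases[OF \<gamma> r True] consider "1 \<le> 9 / \<gamma>\<^sup>2 * t\<^sup>2" | "t \<in> ?I"
      by (auto simp: abs_le_iff)
    then show ?thesis
    proof cases
      case 1
      then have "1 \<le> ennreal (9 / \<gamma>\<^sup>2) * ennreal (t\<^sup>2)"
        by (simp add: ennreal_mult'[symmetric] flip: ennreal_1)
      then show ?thesis by (simp add: add_increasing)
    qed simp
  qed simp
  have "(\<integral>\<^sup>+t. (if \<bar>\<gamma> * t\<bar> \<le> 3/2 * (t\<^sup>2 + r) then 1 else 0) \<partial>centered_normal \<sigma>)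
      \<le> (\<integral>\<^sup>+t. indicator ?I t + ennreal (9 / \<gamma>\<^sup>2) * ennreal (t\<^sup>2) \<partial>centered_normal \<sigma>)"
    by (intro nn_integral_mono pointwise)
  also have "\<dots> = emeasure (centered_normal \<sigma>) ?I + ennreal (9 / \<gamma>\<^sup>2) * ennreal (\<sigma>\<^sup>2)"
    by (subst nn_integral_add)
       (simp_all add: nn_integral_cmult nn_integral_centered_normal_square[OF sig])
  also have "\<dots> \<le> ennreal (3 * r / (\<gamma> * \<sigma>)) + ennreal (9 * \<sigma>\<^sup>2 / \<gamma>\<^sup>2)"
    using emeasure_centered_normal_interval_le[OF sig, of "3 * r / \<gamma>"] r \<gamma>
    by (simp add: ennreal_mult'[symmetric] mult.commute)
  finally show ?thesis .
qed

lemma nn_integral_gauss_vec_sqnorm: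
  assumes sig: "\<sigma> > 0"
  shows "(\<integral>\<^sup>+x. ennreal (sqnorm m x) \<partial>gauss_vec m \<sigma>) = ennreal (real m * \<sigma>\<^sup>2)"
proof -
  interpret product_prob_space "\<lambda>_::nat. centered_normal \<sigma>" "{..<m}"
    by (intro product_prob_spaceI prob_space_normal_density sig)
  have coordinate: "(\<integral>\<^sup>+x. ennreal ((x i)\<^sup>2) \<partial>gauss_vec m \<sigma>) = ennreal (\<sigma>\<^sup>2)" if "i < m" for i
  proof -
    have "(\<integral>\<^sup>+x. ennreal ((x i)\<^sup>2) \<partial>gauss_vec m \<sigma>)
        = (\<integral>\<^sup>+t. ennreal (t\<^sup>2) \<partial>distr (gauss_vec m \<sigma>) (centered_normal \<sigma>) (\<lambda>x. x i))"
      using that by (subst nn_integral_distr) (auto simp: gauss_vec_def)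
    also have "\<dots> = ennreal (\<sigma>\<^sup>2)"
      using PiM_component[of i] that nn_integral_centered_normal_square[OF sig]
      by (simp add: gauss_vec_def)
    finally show ?thesis .
  qed
  have "(\<integral>\<^sup>+x. ennreal (sqnorm m x) \<partial>gauss_vec m \<sigma>)
      = (\<integral>\<^sup>+x. (\<Sum>i<m. ennreal ((x i)\<^sup>2)) \<partial>gauss_vec m \<sigma>)"
    by (simp add: sqnorm_def sum_ennreal)
  also have "\<dots> = (\<Sum>i<m. \<integral>\<^sup>+x. ennreal ((x i)\<^sup>2) \<partial>gauss_vec m \<sigma>)"
    by (rule nn_integral_sum) (simp add: gauss_vec_def)
  also have "\<dots> = ennreal (real m * \<sigma>\<^sup>2)"
    by (simp add: coordinate ennreal_of_nat_eq_real_of_nat ennreal_mult)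
  finally show ?thesis .
qed

lemma nn_integral_gauss_vec_small_inner_le:
  assumes sig: "\<sigma> > 0" and \<gamma>: "vnorm m u > 0"
  shows "(\<integral>\<^sup>+X. (if \<bar>vinner m X u\<bar> \<le> 3/2 * sqnorm m X then 1 else 0) \<partial>gauss_vec m \<sigma>)
       \<le> ennreal (3 * real m * \<sigma> / vnorm m u + 9 * \<sigma>\<^sup>2 / (vnorm m u)\<^sup>2)"
proof -
  define \<gamma> where "\<gamma> = vnorm m u"
  have \<gamma>_pos: "\<gamma> > 0" using \<gamma> by (simp add: \<gamma>_def)
  from \<gamma> obtain k where m: "m = Suc k"
    by (cases m) (simp_all add: vnorm_def)
  interpret prob_space "gauss_vec k \<sigma>" by (rule prob_space_gauss_vec[OF sig])
  have g: "case_prod (\<lambda>(a::real) b. if \<bar>a\<bar> \<le> 3/2 * b then 1 else 0 :: ennreal) \<in> borel_measurable (borel \<Otimes>\<^sub>M borel)"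
    by measurable
  have "(\<integral>\<^sup>+X. (if \<bar>vinner m X u\<bar> \<le> 3/2 * sqnorm m X then 1 else 0) \<partial>gauss_vec m \<sigma>)
      = (\<integral>\<^sup>+x. \<integral>\<^sup>+t. (if \<bar>\<gamma> * t\<bar> \<le> 3/2 * (t\<^sup>2 + sqnorm k x) then 1 else 0)
            \<partial>centered_normal \<sigma> \<partial>gauss_vec k \<sigma>)"
    unfolding m \<gamma>_def by (rule nn_integral_gauss_vec_rotate[OF sig g])
  also have "\<dots> \<le> (\<integral>\<^sup>+x. ennreal (3 / (\<gamma> * \<sigma>)) * ennreal (sqnorm k x) + ennreal (9 * \<sigma>\<^sup>2 / \<gamma>\<^sup>2)
            \<partial>gauss_vec k \<sigma>)"
  proof (rule nn_integral_mono)
    fix x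
    have "ennreal (3 * sqnorm k x / (\<gamma> * \<sigma>)) = ennreal (3 / (\<gamma> * \<sigma>)) * ennreal (sqnorm k x)"
      using sig \<gamma>_pos by (simp add: sqnorm_nonneg ennreal_mult'[symmetric])
    with nn_integral_centered_normal_ratio_le[OF sig \<gamma>_pos sqnorm_nonneg[of k x]] show "(\<integral>\<^sup>+t. (if \<bar>\<gamma> * t\<bar> \<le> 3/2 * (t\<^sup>2 + sqnorm k x) then 1 else 0) \<partial>centered_normal \<sigma>)
        \<le> ennreal (3 / (\<gamma> * \<sigma>)) * ennreal (sqnorm k x) + ennreal (9 * \<sigma>\<^sup>2 / \<gamma>\<^sup>2)"
      by simp
  qed
  also have "\<dots> = ennreal (3 / (\<gamma> * \<sigma>)) * ennreal (real k * \<sigma>\<^sup>2) + ennreal (9 * \<sigma>\<^sup>2 / \<gamma>\<^sup>2)"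
    by (subst nn_integral_add)
       (simp_all add: nn_integral_cmult nn_integral_gauss_vec_sqnorm[OF sig] emeasure_space_1)
  also have "\<dots> = ennreal (3 * real k * \<sigma> / \<gamma> + 9 * \<sigma>\<^sup>2 / \<gamma>\<^sup>2)"
  proof -
    have "ennreal (3 / (\<gamma> * \<sigma>)) * ennreal (real k * \<sigma>\<^sup>2) = ennreal (3 * real k * \<sigma> / \<gamma>)"
      using sig \<gamma>_pos by (simp add: ennreal_mult'[symmetric] power2_eq_square)
    then show ?thesis
      using sig \<gamma>_pos by (simp add: ennreal_plus)
  qed
  also have "\<dots> \<le> ennreal (3 * real m * \<sigma> / \<gamma> + 9 * \<sigma>\<^sup>2 / \<gamma>\<^sup>2)"
    using sig \<gamma>_pos by (intro ennreal_leI add_right_mono divide_right_mono) (simp_all add: m)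
  finally show ?thesis unfolding \<gamma>_def .
qed

lemma q_step_eq_0_imp_bounds:
  assumes q: "q_step m w u X = 0" and w: "w \<in> {-1..1}"
  shows "delta_sq m w u X \<le> sqnorm m X" and "\<bar>vinner m X u\<bar> \<le> 3/2 * sqnorm m X"
proof -
  have "delta_sq m w u X \<le> sqnorm m X \<and> \<bar>vinner m X u\<bar> \<le> 3/2 * sqnorm m X"
  proof (cases "sqnorm m X = 0")
    case True
    then have "\<forall>i<m. X i = 0"
      by (simp add: sqnorm_def sum_nonneg_eq_0_iff)
    then have "vinner m X u = 0" by (simp add: vinner_def)
    with True show ?thesis by (simp add: delta_sq_def vnorm_power2)
  next
    case False
    then have pos: "sqnorm m X > 0" using sqnorm_nonneg[of m X] by linarith
    define s where "s = vinner m X u / sqnorm m X"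
    have inner: "vinner m X u = s * sqnorm m X" using pos by (simp add: s_def)
    from q have "Q (w + s) = 0" by (simp add: q_step_def vnorm_power2 s_def)
    then have ws: "\<bar>w + s\<bar> \<le> 1/2" unfolding Q_def by (auto split: if_splits abs_split)
    have "delta_sq m w u X = sqnorm m X * ((w + s)\<^sup>2 - s\<^sup>2)"
      unfolding delta_sq_def q vnorm_power2 inner by (simp add: power2_eq_square algebra_simps)
    also have "\<dots> \<le> sqnorm m X * 1"
    proof (rule mult_left_mono)
      have "(w + s)\<^sup>2 \<le> 1/4" using power_mono[OF ws abs_ge_zero, of 2] by (simp add: power_divide)
      then show "(w + s)\<^sup>2 - s\<^sup>2 \<le> 1" using zero_le_power2[of s] by linarith
    qed (use pos in simp)
    moreover have "\<bar>s\<bar> \<le> 3/2"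
      using ws w by (auto simp: abs_if split: if_splits)
    ultimately show ?thesis
      using pos by (simp add: inner abs_mult mult_right_mono)
  qed
  then show "delta_sq m w u X \<le> sqnorm m X" and "\<bar>vinner m X u\<bar> \<le> 3/2 * sqnorm m X"
    by simp_all
qed

lemma quantization_integrand_le:
  assumes w: "w \<in> {-1..1}" and lam: "lam \<ge> 0" and B: "lam * B\<^sup>2 \<le> C"
  shows "exp (lam * delta_sq m w u X) * indicator {X. q_step m w u X = 0} X
           * indicator {X. vnorm m X \<le> B} X
       \<le> exp C * (if \<bar>vinner m X u\<bar> \<le> 3/2 * sqnorm m X then 1 else 0)"
proof (cases "q_step m w u X = 0 \<and> vnorm m X \<le> B")
  case True
  then have "(vnorm m X)\<^sup>2 \<le> B\<^sup>2"
    by (intro power_mono) (simp_all add: vnorm_def sum_nonneg)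
  then have "sqnorm m X \<le> B\<^sup>2"
    by (simp add: vnorm_power2)
  then have "lam * delta_sq m w u X \<le> C"
    using q_step_eq_0_imp_bounds(1)[OF _ w, of m u X] True lam B
    by (meson mult_left_mono order_trans)
  with True show ?thesis
    using q_step_eq_0_imp_bounds(2)[OF _ w, of m u X] by simp
qed (auto simp: indicator_def)

lemma nn_integral_quantization_le:
  assumes sig: "\<sigma> > 0" and w: "w \<in> {-1..1}" and lam: "lam \<ge> 0" and B: "lam * B\<^sup>2 \<le> C"
    and u: "vnorm m u > 0"
  shows "(\<integral>\<^sup>+X. ennreal (exp (lam * delta_sq m w u X) * indicator {X. q_step m w u X = 0} X
              * indicator {X. vnorm m X \<le> B} X) \<partial>gauss_vec m \<sigma>)
       \<le> ennreal (exp C * (3 * real m * \<sigma> / vnorm m u + 9 * \<sigma>\<^sup>2 / (vnorm m u)\<^sup>2))"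
proof -
  have "(\<integral>\<^sup>+X. ennreal (exp (lam * delta_sq m w u X) * indicator {X. q_step m w u X = 0} X
              * indicator {X. vnorm m X \<le> B} X) \<partial>gauss_vec m \<sigma>)
      \<le> (\<integral>\<^sup>+X. ennreal (exp C) * (if \<bar>vinner m X u\<bar> \<le> 3/2 * sqnorm m X then 1 else 0) \<partial>gauss_vec m \<sigma>)"
  proof (rule nn_integral_mono)
    fix X
    have "ennreal (exp (lam * delta_sq m w u X) * indicator {X. q_step m w u X = 0} X
              * indicator {X. vnorm m X \<le> B} X)
        \<le> ennreal (exp C * (if \<bar>vinner m X u\<bar> \<le> 3/2 * sqnorm m X then 1 else 0))"
      by (rule ennreal_leI[OF quantization_integrand_le[OF w lam B]])
    also have "\<dots> = ennreal (exp C) * (if \<bar>vinner m X u\<bar> \<le> 3/2 * sqnorm m X then 1 else 0)"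
      by simp
    finally show "ennreal (exp (lam * delta_sq m w u X) * indicator {X. q_step m w u X = 0} X
              * indicator {X. vnorm m X \<le> B} X)
        \<le> ennreal (exp C) * (if \<bar>vinner m X u\<bar> \<le> 3/2 * sqnorm m X then 1 else 0)" .
  qed
  also have "\<dots> = ennreal (exp C) * (\<integral>\<^sup>+X. (if \<bar>vinner m X u\<bar> \<le> 3/2 * sqnorm m X then 1 else 0) \<partial>gauss_vec m \<sigma>)"
    by (rule nn_integral_cmult) measurable
  also have "\<dots> \<le> ennreal (exp C) * ennreal (3 * real m * \<sigma> / vnorm m u + 9 * \<sigma>\<^sup>2 / (vnorm m u)\<^sup>2)"
    by (rule mult_left_mono[OF nn_integral_gauss_vec_small_inner_le[OF sig u]]) simp
  also have "\<dots> = ennreal (exp C * (3 * real m * \<sigma> / vnorm m u + 9 * \<sigma>\<^sup>2 / (vnorm m u)\<^sup>2))"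
    by (simp add: ennreal_mult')
  finally show ?thesis .
qed

lemma scaled_ratio_bound_le:
  fixes \<sigma> \<gamma> E \<rho> :: real
  assumes sig: "\<sigma> > 0" and \<gamma>: "\<gamma> > 0" and E: "E \<ge> 1" and m: "m \<ge> 1" and "\<rho> \<le> 1"
    and big: "20 * E * \<sigma> * m \<le> \<rho> * \<gamma>"
  shows "E * (3 * m * \<sigma> / \<gamma> + 9 * \<sigma>\<^sup>2 / \<gamma>\<^sup>2) \<le> \<rho>"
proof -
  define \<delta> where "\<delta> = \<sigma> / \<gamma>"
  have \<delta>: "\<delta> > 0" "20 * E * m * \<delta> \<le> \<rho>"
    using sig \<gamma> big by (simp_all add: \<delta>_def field_simps)
  have "1 \<le> E * m"
    using mult_mono[OF E m] E by simp
  then have "20 * \<delta> \<le> 20 * E * m * \<delta>"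
    using \<delta>(1) mult_right_mono[of 1 "E * m" "20 * \<delta>"] by (simp add: mult_ac)
  then have "20 * \<delta> \<le> 1"
    using \<delta>(2) \<open>\<rho> \<le> 1\<close> by linarith
  then have "9 * \<delta>\<^sup>2 \<le> m * \<delta>"
    using \<delta>(1) m by (simp add: power2_eq_square)
  then have "E * (3 * m * \<delta> + 9 * \<delta>\<^sup>2) \<le> E * (4 * m * \<delta>)"
    using E by (intro mult_left_mono) (simp_all add: mult.commute)
  also have "\<dots> = 4 * (E * m * \<delta>)" by simp
  also have "\<dots> \<le> 20 * (E * m * \<delta>)" using \<delta>(1) E m by simp
  also have "\<dots> \<le> \<rho>" using \<delta>(2) by (simp add: mult.assoc)
  finally show ?thesis
    by (simp add: \<delta>_def power_divide)
qed

lemma quantization_step_bound: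
  assumes m: "m \<ge> 1" and sig: "\<sigma> > 0" and N\<^sub>0: "N\<^sub>0 \<ge> 2" and \<epsilon>: "\<epsilon> > 0"
    and w: "w \<in> {-1..1}" and dist_w: "infdist w {-1, 0, 1} \<ge> \<epsilon>"
    and C_sup: "C_sup > 0" and C_lam: "C_lam > 0" and \<rho>: "0 < \<rho>" "\<rho> < 1"
  shows "(\<integral>\<^sup>+ X. ennreal (exp (C_lam / (C_sup\<^sup>2 * \<sigma>\<^sup>2 * real m * ln (real N\<^sub>0)) * delta_sq m w u X)
                     * indicator {X. q_step m w u X = 0} X
                     * indicator {X. vnorm m X \<le> C_sup * \<sigma> * sqrt (real m * ln (real N\<^sub>0))} X
                     * (if vnorm m u \<ge> 40 * exp C_lam * \<sigma> * real m * ln (real N\<^sub>0) / (\<rho> * \<epsilon>)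
                        then 1 else 0)) \<partial>gauss_vec m \<sigma>)
         \<le> ennreal \<rho>"
proof (cases "vnorm m u \<ge> 40 * exp C_lam * \<sigma> * real m * ln (real N\<^sub>0) / (\<rho> * \<epsilon>)")
  case True
  define L where "L = ln (real N\<^sub>0)"
  have "ln (1/2 :: real) \<le> 1/2 - 1" by (rule ln_le_minus_one) simp
  moreover have "ln (2 :: real) \<le> L" using N\<^sub>0 by (simp add: L_def)
  ultimately have L: "L \<ge> 1/2" by (simp add: ln_div)
  have "\<epsilon> \<le> dist w 0" using dist_w infdist_le[of 0 "{-1, 0, 1}" w] by simp
  with w have "\<epsilon> \<le> 1" by (auto simp: dist_real_def abs_if split: if_splits)
  have "0 < 40 * exp C_lam * \<sigma> * real m * L / (\<rho> * \<epsilon>)"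
    using m sig L \<epsilon> \<rho> by simp
  with True have u: "vnorm m u > 0" by (simp add: L_def)
  have "20 * exp C_lam * \<sigma> * real m \<le> 40 * exp C_lam * \<sigma> * real m * L / \<epsilon>"
    using \<open>\<epsilon> \<le> 1\<close> L \<epsilon> sig m by (simp add: field_simps)
  also have "\<dots> \<le> \<rho> * vnorm m u"
    using True \<rho> \<epsilon> by (simp add: L_def field_simps)
  finally have big: "20 * exp C_lam * \<sigma> * real m \<le> \<rho> * vnorm m u" .
  let ?lam = "C_lam / (C_sup\<^sup>2 * \<sigma>\<^sup>2 * real m * L)" and ?B = "C_sup * \<sigma> * sqrt (real m * L)"
  have "?lam * ?B\<^sup>2 = C_lam"
    using m sig C_sup L by (simp add: power_mult_distrib)
  then have "(\<integral>\<^sup>+ X. ennreal (exp (?lam * delta_sq m w u X) * indicator {X. q_step m w u X = 0} X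
                     * indicator {X. vnorm m X \<le> ?B} X) \<partial>gauss_vec m \<sigma>)
      \<le> ennreal (exp C_lam * (3 * real m * \<sigma> / vnorm m u + 9 * \<sigma>\<^sup>2 / (vnorm m u)\<^sup>2))"
    using C_lam C_sup sig m L by (intro nn_integral_quantization_le[OF sig w _ _ u]) simp_all
  also have "\<dots> \<le> ennreal \<rho>"
    using scaled_ratio_bound_le[OF sig u _ _ _ big] m \<rho> C_lam by (intro ennreal_leI) simp
  finally show ?thesis using True by (simp add: L_def)
qed simp

theorem lemma8:
  fixes c_norm :: real
  assumes "gauss_norm_conc c_norm"
  shows "\<exists>C>0. \<forall>(m::nat) (\<sigma>::real) (u::nat \<Rightarrow> real) (w::real) (\<epsilon>::real) (N\<^sub>0::nat)
                 (C_sup::real) (C_lam::real) (\<rho>::real).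
     m \<ge> 1 \<and> \<sigma> > 0 \<and> N\<^sub>0 \<ge> 2 \<and> \<epsilon> > 0 \<and> w \<in> {-1..1} \<and> infdist w {-1, 0, 1} \<ge> \<epsilon> \<and>
     C_sup > 0 \<and> 0 < C_lam \<and> C_lam < c_norm / 12 \<and> 0 < \<rho> \<and> \<rho> < 1 \<longrightarrow>
     (let lam = C_lam / (C_sup\<^sup>2 * \<sigma>\<^sup>2 * real m * ln (real N\<^sub>0));
          \<beta> = C * exp C_lam * \<sigma> * real m * ln (real N\<^sub>0) / (\<rho> * \<epsilon>)
      in (\<integral>\<^sup>+ X. ennreal (exp (lam * delta_sq m w u X)
                     * indicator {X. q_step m w u X = 0} X
                     * indicator {X. vnorm m X \<le> C_sup * \<sigma> * sqrt (real m * ln (real N\<^sub>0))} X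
                     * (if vnorm m u \<ge> \<beta> then 1 else 0)) \<partial>gauss_vec m \<sigma>)
         \<le> ennreal \<rho>)"
  unfolding Let_def
  by (intro exI[of _ 40] conjI allI impI zero_less_numeral quantization_step_bound) auto

end
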